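(* Fix $m\ge1$ and let $F_m\subseteq P$ be the set of classes $[f]$ where $f$ is a multicolored forest of corank $m$. Any two elements $[f_1],[f_2]\in F_m$ have a least upper bound $[f_1]\vee[f_2]$ in $(F_m,\le)$. If $[f_1]$ and $[f_2]$ can both be represented by elementary multicolored forests, then so can $[f_1]\vee[f_2]$.
   Context: Let $\mathfrak C=\{0,1\}^{\omega}$, $S$ a nonempty set, $G$ a subgroup of the symmetric group of $S$, and $\mathfrak C^S$ the space of functions $S\to\mathfrak C$. For $\psi\colon S\to\{0,1\}^*$ with $\psi(s)=\varnothing$ for all but finitely many $s$, the dyadic brick $B(\psi)$ is the set of $\kappa\in\mathfrak C^S$ with $\psi(s)$ a prefix of $\kappa(s)$ for all $s$; $\Phi_\psi(\kappa)(s)=\psi(s)\cdot\kappa(s)$ is the canonical homeomorphism $\mathfrak C^S\to B(\psi)$; for $\gamma\in G$, $\tau_\gamma(\kappa)(s)=\kappa(\gamma^{-1}s)$, and the twist homeomorphism $B(\varphi)\to B(\psi)$ associated to $\gamma$ is $\Phi_\psi\tau_\gamma\Phi_\varphi^{-1}$. For $m\ge1$, let $\mathfrak C^S(m)=\mathfrak C^S_1\sqcup\dots\sqcup\mathfrak C^S_m$ be a disjoint union of $m$ copies of $\mathfrak C^S$, with $\mathfrak C^S(1)=\mathfrak C^S$. A dyadic brick in $\mathfrak C^S(m)$ is a dyadic brick in one of the cubes; canonical and twist homeomorphisms between bricks in possibly different cubes are defined via the identifications of each cube with $\mathfrak C^S$. $S\mathcal V_G$ is the set of homeomorphisms $h\colon\mathfrak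 C^S(m)\to\mathfrak C^S(n)$ ($m,n\ge1$) for which there are partitions of $\mathfrak C^S(m)$ and $\mathfrak C^S(n)$ into the same number of dyadic bricks $B_i$, $B_i'$ and $\gamma_i\in G$ such that $h$ maps each $B_i$ to $B_i'$ by the twist homeomorphism associated to $\gamma_i$; $n$ is the rank and $m$ the corank of $h$. For $\sigma\in\Sigma_n$, $p_\sigma$ maps each $\mathfrak C^S_i$ to $\mathfrak C^S_{\sigma(i)}$ by the identity identification; a twisted permutation of $\mathfrak C^S(n)$ is $(\tau_{\gamma_1}\oplus\dots\oplus\tau_{\gamma_n})p_\sigma$ (where $\oplus$ applies maps to consecutive cubes), and these form a group $\mathcal G(n)\cong G\wr\Sigma_n$. A very elementary expansion of a partition $\mathcal P$ of $\mathfrak C^S(m)$ into dyadic bricks is a partition $\mathcal P'$ into dyadic bricks such that every brick of $\mathcal P$ is a union of at most two bricks of $\mathcal P'$; a dyadic partition of $\mathfrak C^S(m)$ is one obtained from $\{\mathfrak C^S_1,\dots,\mathfrak C^S_m\}$ by finitely many very elementary expansions. A multicolored forest is a homeomorphism $f\colon\mathfrak C^S(m)\to\mathfrak C^S(n)$ mapping the bricks $B_1,\dots,B_n$ of some dyadic partition of $\mathfrak C^S(m)$ onto $\mathfrak C^S_1,\dots,\mathfrak C^S_n$ respectively by canonical homeomorphisms. A dyadic brick $B(\psi)$ is elementary if $\psi(s)\in\{\varnothing,0,1\}$ for all $s\in S$; a multicolored forest is elementary if the bricks of its dyadic partition are all elementary. For $h\in S\mathcal V_G$ of rank $n$ write $[h]=\mathcal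 G(n)h$, and let $P$ be the set of all such classes. For $v,w\in P$, $v\le w$ means there exist $h\in S\mathcal V_G$ and a multicolored forest $f$ with $v=[h]$ and $w=[fh]$; this is a partial order. *)

theory Defs
  imports "HOL-Analysis.Analysis" "HOL-Library.FuncSet" "HOL-Combinatorics.Permutations"
begin

text \<open>Cantor space C = nat => bool; finite binary words = bool list;
  a point of C^S is a map 'a => C (the type 'a plays the role of S).
  A point of C^S(m) is a pair (i, kappa) with i < m (cubes indexed 0..m-1).\<close>

type_synonym 'a cpt = "'a \<Rightarrow> nat \<Rightarrow> bool"

definition is_prefix :: "bool list \<Rightarrow> (nat \<Rightarrow> bool) \<Rightarrow> bool" where
  "is_prefix w x \<longleftrightarrow> (\<forall>i < length w. x i = w ! i)"

definition wcat :: "bool list \<Rightarrow> (nat \<Rightarrow> bool) \<Rightarrow> (nat \<Rightarrow> bool)" where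
  "wcat w x = (\<lambda>i. if i < length w then w ! i else x (i - length w))"

definition wdrop :: "bool list \<Rightarrow> (nat \<Rightarrow> bool) \<Rightarrow> (nat \<Rightarrow> bool)" where
  "wdrop w x = (\<lambda>i. x (i + length w))"

definition fin_supp :: "('a \<Rightarrow> bool list) \<Rightarrow> bool" where
  "fin_supp \<psi> \<longleftrightarrow> finite {s. \<psi> s \<noteq> []}"

definition brick :: "('a \<Rightarrow> bool list) \<Rightarrow> 'a cpt set" where
  "brick \<psi> = {\<kappa>. \<forall>s. is_prefix (\<psi> s) (\<kappa> s)}"

definition Phi :: "('a \<Rightarrow> bool list) \<Rightarrow> 'a cpt \<Rightarrow> 'a cpt" where
  "Phi \<psi> \<kappa> = (\<lambda>s. wcat (\<psi> s) (\<kappa> s))"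

definition Phi_inv :: "('a \<Rightarrow> bool list) \<Rightarrow> 'a cpt \<Rightarrow> 'a cpt" where
  "Phi_inv \<psi> \<kappa> = (\<lambda>s. wdrop (\<psi> s) (\<kappa> s))"

definition tau :: "('a \<Rightarrow> 'a) \<Rightarrow> 'a cpt \<Rightarrow> 'a cpt" where
  "tau \<gamma> \<kappa> = (\<lambda>s. \<kappa> (inv \<gamma> s))"

definition twist :: "('a \<Rightarrow> bool list) \<Rightarrow> ('a \<Rightarrow> bool list) \<Rightarrow> ('a \<Rightarrow> 'a) \<Rightarrow> 'a cpt \<Rightarrow> 'a cpt" where
  "twist \<phi> \<psi> \<gamma> = Phi \<psi> \<circ> tau \<gamma> \<circ> Phi_inv \<phi>"

definition perm_subgroup :: "('a \<Rightarrow> 'a) set \<Rightarrow> bool" where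
  "perm_subgroup G \<longleftrightarrow> (\<forall>g\<in>G. bij g) \<and> id \<in> G \<and>
     (\<forall>g\<in>G. \<forall>h\<in>G. g \<circ> h \<in> G) \<and> (\<forall>g\<in>G. inv g \<in> G)"

definition cantor_top :: "(nat \<Rightarrow> bool) topology" where
  "cantor_top = product_topology (\<lambda>_. discrete_topology (UNIV::bool set)) UNIV"

definition CS_top :: "'a cpt topology" where
  "CS_top = product_topology (\<lambda>_. cantor_top) UNIV"

definition cubes :: "nat \<Rightarrow> (nat \<times> 'a cpt) topology" where
  "cubes m = sum_topology (\<lambda>_. CS_top) {..<m}"

definition carr :: "nat \<Rightarrow> (nat \<times> 'a cpt) set" where
  "carr m = {..<m} \<times> UNIV"

text \<open>A dyadic brick in C^S(m) is described by (cube index, psi).\<close>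
type_synonym 'a bdesc = "nat \<times> ('a \<Rightarrow> bool list)"

definition valid_brick :: "nat \<Rightarrow> 'a bdesc \<Rightarrow> bool" where
  "valid_brick m b \<longleftrightarrow> fst b < m \<and> fin_supp (snd b)"

definition bset :: "'a bdesc \<Rightarrow> (nat \<times> 'a cpt) set" where
  "bset b = {fst b} \<times> brick (snd b)"

text \<open>morphisms are represented as functions extensional on the domain carrier\<close>
type_synonym 'a cmap = "nat \<times> 'a cpt \<Rightarrow> nat \<times> 'a cpt"

definition SV :: "('a \<Rightarrow> 'a) set \<Rightarrow> nat \<Rightarrow> nat \<Rightarrow> 'a cmap \<Rightarrow> bool" where
  "SV G m n h \<longleftrightarrow> 1 \<le> m \<and> 1 \<le> n \<and>
     homeomorphic_map (cubes m) (cubes n) h \<and> h \<in> extensional (carr m) \<and>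
     (\<exists>(k::nat) (P::nat \<Rightarrow> 'a bdesc) (Q::nat \<Rightarrow> 'a bdesc) (\<gamma>::nat \<Rightarrow> 'a \<Rightarrow> 'a).
        (\<forall>j<k. valid_brick m (P j) \<and> valid_brick n (Q j) \<and> \<gamma> j \<in> G) \<and>
        (\<forall>j<k. \<forall>j'<k. j \<noteq> j' \<longrightarrow> bset (P j) \<inter> bset (P j') = {} \<and> bset (Q j) \<inter> bset (Q j') = {}) \<and>
        (\<Union>j<k. bset (P j)) = carr m \<and> (\<Union>j<k. bset (Q j)) = carr n \<and>
        (\<forall>j<k. \<forall>x\<in>bset (P j). h x = (fst (Q j), twist (snd (P j)) (snd (Q j)) (\<gamma> j) (snd x))))"

definition twperm :: "nat \<Rightarrow> (nat \<Rightarrow> nat) \<Rightarrow> (nat \<Rightarrow> 'a \<Rightarrow> 'a) \<Rightarrow> 'a cmap" where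
  "twperm n \<sigma> \<gamma> = restrict (\<lambda>(i, \<kappa>). (\<sigma> i, tau (\<gamma> (\<sigma> i)) \<kappa>)) (carr n)"

definition twisted_perms :: "('a \<Rightarrow> 'a) set \<Rightarrow> nat \<Rightarrow> 'a cmap set" where
  "twisted_perms G n = {twperm n \<sigma> \<gamma> | \<sigma> \<gamma>. \<sigma> permutes {..<n} \<and> (\<forall>i<n. \<gamma> i \<in> G)}"

definition cls :: "('a \<Rightarrow> 'a) set \<Rightarrow> nat \<Rightarrow> nat \<Rightarrow> 'a cmap \<Rightarrow> 'a cmap set" where
  "cls G m n h = {compose (carr m) p h | p. p \<in> twisted_perms G n}"

definition Pcls :: "('a \<Rightarrow> 'a) set \<Rightarrow> 'a cmap set set" where
  "Pcls G = {cls G m n h | m n h. SV G m n h}"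

definition brick_partition :: "nat \<Rightarrow> 'a bdesc set \<Rightarrow> bool" where
  "brick_partition m P \<longleftrightarrow> finite P \<and> (\<forall>b\<in>P. valid_brick m b) \<and>
     (\<forall>b\<in>P. \<forall>b'\<in>P. b \<noteq> b' \<longrightarrow> bset b \<inter> bset b' = {}) \<and> (\<Union>b\<in>P. bset b) = carr m"

definition very_elem_expansion :: "nat \<Rightarrow> 'a bdesc set \<Rightarrow> 'a bdesc set \<Rightarrow> bool" where
  "very_elem_expansion m P P' \<longleftrightarrow> brick_partition m P' \<and>
     (\<forall>b\<in>P. \<exists>b1\<in>P'. \<exists>b2\<in>P'. bset b = bset b1 \<union> bset b2)"

inductive dyadic_partition :: "nat \<Rightarrow> 'a bdesc set \<Rightarrow> bool" for m where
  base: "dyadic_partition m {(i, \<lambda>_. []) | i. i < m}"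
| step: "dyadic_partition m P \<Longrightarrow> very_elem_expansion m P P' \<Longrightarrow> dyadic_partition m P'"

definition mc_forest_via :: "nat \<Rightarrow> nat \<Rightarrow> 'a cmap \<Rightarrow> (nat \<Rightarrow> 'a bdesc) \<Rightarrow> bool" where
  "mc_forest_via m n f B \<longleftrightarrow>
     homeomorphic_map (cubes m) (cubes n) f \<and> f \<in> extensional (carr m) \<and>
     dyadic_partition m (B ` {..<n}) \<and> inj_on B {..<n} \<and>
     (\<forall>j<n. \<forall>x\<in>bset (B j). f x = (j, Phi_inv (snd (B j)) (snd x)))"

definition mc_forest :: "nat \<Rightarrow> nat \<Rightarrow> 'a cmap \<Rightarrow> bool" where
  "mc_forest m n f \<longleftrightarrow> (\<exists>B. mc_forest_via m n f B)"

definition elem_mc_forest :: "nat \<Rightarrow> nat \<Rightarrow> 'a cmap \<Rightarrow> bool" where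
  "elem_mc_forest m n f \<longleftrightarrow> (\<exists>B. mc_forest_via m n f B \<and>
     (\<forall>j<n. \<forall>s. snd (B j) s \<in> {[], [False], [True]}))"

definition cls_le :: "('a \<Rightarrow> 'a) set \<Rightarrow> 'a cmap set \<Rightarrow> 'a cmap set \<Rightarrow> bool" where
  "cls_le G v w \<longleftrightarrow> (\<exists>m n n' h f. SV G m n h \<and> mc_forest n n' f \<and>
     v = cls G m n h \<and> w = cls G m n' (compose (carr m) f h))"

definition Fm :: "('a \<Rightarrow> 'a) set \<Rightarrow> nat \<Rightarrow> 'a cmap set set" where
  "Fm G m = {cls G m n f | n f. mc_forest m n f}"

definition is_lub_in :: "('a \<Rightarrow> 'a) set \<Rightarrow> 'a cmap set set \<Rightarrow> 'a cmap set \<Rightarrow> 'a cmap set \<Rightarrow> 'a cmap set \<Rightarrow> bool" where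
  "is_lub_in G X v1 v2 u \<longleftrightarrow> u \<in> X \<and> cls_le G v1 u \<and> cls_le G v2 u \<and>
     (\<forall>u'\<in>X. cls_le G v1 u' \<and> cls_le G v2 u' \<longrightarrow> cls_le G u u')"

definition elem_rep :: "('a \<Rightarrow> 'a) set \<Rightarrow> nat \<Rightarrow> 'a cmap set \<Rightarrow> bool" where
  "elem_rep G m v \<longleftrightarrow> (\<exists>n f. elem_mc_forest m n f \<and> v = cls G m n f)"

end

(* The order on F_m is reverse refinement of fibres: for forests f and g of corank m,
   [f] <= [g] iff every fibre of g over a cube lies in a fibre of f. Composing with a forest
   only coarsens fibres and twisted permutations only rename them, which gives one direction.
   Conversely g then factors as h o f, and h is a forest because f maps every dyadic partition
   refining its bricks to a dyadic partition (the very elementary expansions are carried along).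
   Hence [f1] v [f2] is represented by the forest whose bricks are the nonempty intersections of
   the bricks of f1 and f2, again a dyadic partition. Bricks are determined by fibres, so every
   representative of the join has these bricks, and intersections of elementary bricks are
   elementary. *)

theory Submission
  imports Defs
begin

section \<open>Words and bricks\<close>

lemma mem_carr_iff [simp]: "x \<in> carr m \<longleftrightarrow> fst x < m"
  by (cases x) (auto simp: carr_def)

lemma wdrop_wcat [simp]: "wdrop w (wcat w x) = x"
  by (auto simp: wdrop_def wcat_def)

lemma wcat_wdrop: "is_prefix w x \<Longrightarrow> wcat w (wdrop w x) = x"
  by (auto simp: is_prefix_def wcat_def wdrop_def)

lemma is_prefix_take: "is_prefix v x \<Longrightarrow> is_prefix (take k v) x"
  by (auto simp: is_prefix_def)

lemma common_prefix_take:
  assumes "is_prefix u x" "is_prefix v x" "length u \<le> length v"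
  shows "u = take (length u) v"
  using assms by (auto simp: is_prefix_def intro!: nth_equalityI)

lemma Phi_inv_Phi [simp]: "Phi_inv \<psi> (Phi \<psi> \<kappa>) = \<kappa>"
  by (auto simp: Phi_def Phi_inv_def)

lemma Phi_in_brick [simp]: "Phi \<psi> \<kappa> \<in> brick \<psi>"
  by (auto simp: Phi_def brick_def is_prefix_def wcat_def)

lemma Phi_Phi_inv: "\<kappa> \<in> brick \<psi> \<Longrightarrow> Phi \<psi> (Phi_inv \<psi> \<kappa>) = \<kappa>"
  by (auto simp: Phi_def Phi_inv_def brick_def wcat_wdrop)

lemma brick_nonempty: "brick \<psi> \<noteq> {}"
  using Phi_in_brick by blast

lemma brick_subset_iff:
  "brick \<psi> \<subseteq> brick \<phi> \<longleftrightarrow> (\<forall>s. length (\<phi> s) \<le> length (\<psi> s) \<and> \<phi> s = take (length (\<phi> s)) (\<psi> s))"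
proof
  assume sub: "brick \<psi> \<subseteq> brick \<phi>"
  show "\<forall>s. length (\<phi> s) \<le> length (\<psi> s) \<and> \<phi> s = take (length (\<phi> s)) (\<psi> s)"
  proof
    fix s
    define \<kappa>0 where "\<kappa>0 = Phi \<psi> (\<lambda>_ _. False)"
    define \<kappa>1 where "\<kappa>1 = Phi \<psi> (\<lambda>_ _. True)"
    have "\<kappa>0 \<in> brick \<phi>" "\<kappa>1 \<in> brick \<phi>" using sub by (auto simp: \<kappa>0_def \<kappa>1_def)
    then have p0: "is_prefix (\<phi> s) (\<kappa>0 s)" and p1: "is_prefix (\<phi> s) (\<kappa>1 s)"
      by (auto simp: brick_def)
    have len: "length (\<phi> s) \<le> length (\<psi> s)"
    proof (rule ccontr)
      assume "\<not> ?thesis"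
      \<comment> \<open>then \<open>\<phi> s\<close> would fix the first free digit, on which \<open>\<kappa>0\<close> and \<open>\<kappa>1\<close> differ\<close>
      then have "\<kappa>0 s (length (\<psi> s)) = \<kappa>1 s (length (\<psi> s))"
        using p0 p1 by (simp add: is_prefix_def)
      then show False by (simp add: \<kappa>0_def \<kappa>1_def Phi_def wcat_def)
    qed
    have "is_prefix (\<psi> s) (\<kappa>0 s)"
      using Phi_in_brick[of \<psi>] by (simp add: \<kappa>0_def brick_def)
    then show "length (\<phi> s) \<le> length (\<psi> s) \<and> \<phi> s = take (length (\<phi> s)) (\<psi> s)"
      using common_prefix_take[OF p0 _ len] len by simp
  qed
next
  assume "\<forall>s. length (\<phi> s) \<le> length (\<psi> s) \<and> \<phi> s = take (length (\<phi> s)) (\<psi> s)"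
  then have "is_prefix (\<phi> s) (\<kappa> s)" if "\<kappa> \<in> brick \<psi>" for \<kappa> s
    using that is_prefix_take[of "\<psi> s" "\<kappa> s" "length (\<phi> s)"] by (simp add: brick_def)
  then show "brick \<psi> \<subseteq> brick \<phi>"
    by (auto simp: brick_def)
qed

lemma brick_inj: "brick \<psi> = brick \<phi> \<Longrightarrow> \<psi> = \<phi>"
  by (rule ext) (metis brick_subset_iff le_antisym order_refl take_all_iff)

lemma bset_eq_image: "bset b = Pair (fst b) ` brick (snd b)"
  by (auto simp: bset_def)

lemma bset_nonempty: "bset b \<noteq> {}"
  using brick_nonempty by (auto simp: bset_def)

lemma bset_subsetD: "bset c \<subseteq> bset b \<Longrightarrow> fst c = fst b \<and> brick (snd c) \<subseteq> brick (snd b)"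
  using bset_nonempty[of c] by (auto simp: bset_def)

lemma bset_inj: "bset b = bset c \<Longrightarrow> b = c"
  using bset_subsetD[of b c] bset_subsetD[of c b] brick_inj by (metis order_refl prod.expand subset_antisym)

lemma bset_subset_carr: "valid_brick m b \<Longrightarrow> bset b \<subseteq> carr m"
  by (auto simp: valid_brick_def bset_def)

lemma bset_cube [simp]: "bset (i, \<lambda>_. []) = {i} \<times> UNIV"
  by (auto simp: bset_def brick_def is_prefix_def)

text \<open>Two bricks meet iff their words are coordinatewise comparable, and the meet is then cut out by
  the longer word.\<close>

definition desc_meet :: "('a \<Rightarrow> bool list) \<Rightarrow> ('a \<Rightarrow> bool list) \<Rightarrow> 'a \<Rightarrow> bool list" where
  "desc_meet \<psi> \<phi> = (\<lambda>s. if length (\<psi> s) \<le> length (\<phi> s) then \<phi> s else \<psi> s)"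

definition bdesc_meet :: "'a bdesc \<Rightarrow> 'a bdesc \<Rightarrow> 'a bdesc" where
  "bdesc_meet b c = (fst b, desc_meet (snd b) (snd c))"

lemma brick_Int:
  assumes "brick \<psi> \<inter> brick \<phi> \<noteq> {}"
  shows "brick \<psi> \<inter> brick \<phi> = brick (desc_meet \<psi> \<phi>)"
proof -
  obtain \<kappa>0 where \<kappa>0: "\<kappa>0 \<in> brick \<psi>" "\<kappa>0 \<in> brick \<phi>" using assms by blast
  have "is_prefix (\<psi> s) x \<and> is_prefix (\<phi> s) x \<longleftrightarrow> is_prefix (desc_meet \<psi> \<phi> s) x" for s x
    using common_prefix_take[of "\<psi> s" "\<kappa>0 s" "\<phi> s"] common_prefix_take[of "\<phi> s" "\<kappa>0 s" "\<psi> s"] \<kappa>0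
    by (auto simp: desc_meet_def brick_def dest: is_prefix_take[where k = "length (\<psi> s)"]
          is_prefix_take[where k = "length (\<phi> s)"])
  then show ?thesis by (auto simp: brick_def)
qed

lemma bset_Int:
  assumes "bset b \<inter> bset c \<noteq> {}"
  shows "fst b = fst c" and "bset b \<inter> bset c = bset (bdesc_meet b c)"
proof -
  show "fst b = fst c" using assms by (auto simp: bset_def)
  moreover have "brick (snd b) \<inter> brick (snd c) \<noteq> {}" using assms by (auto simp: bset_def)
  ultimately show "bset b \<inter> bset c = bset (bdesc_meet b c)"
    using brick_Int by (auto simp: bset_def bdesc_meet_def)
qed

lemma valid_brick_bdesc_meet:
  assumes "valid_brick m b" "valid_brick m c"
  shows "valid_brick m (bdesc_meet b c)"
proof -
  have "{s. desc_meet (snd b) (snd c) s \<noteq> []} \<subseteq> {s. snd b s \<noteq> []} \<union> {s. snd c s \<noteq> []}"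
    by (auto simp: desc_meet_def)
  then show ?thesis
    using assms by (auto simp: valid_brick_def fin_supp_def bdesc_meet_def intro: finite_subset)
qed

lemma bdesc_meet_cube: "bdesc_meet (fst c, \<lambda>_. []) c = c"
  by (simp add: bdesc_meet_def desc_meet_def)

lemma bdesc_meet_subset: "bset b \<subseteq> bset c \<Longrightarrow> bdesc_meet b c = b"
  using bset_subsetD[of b c]
  by (auto simp: bdesc_meet_def desc_meet_def brick_subset_iff prod_eq_iff fun_eq_iff)
     (metis le_antisym take_all)

definition elementary_desc :: "('a \<Rightarrow> bool list) \<Rightarrow> bool" where
  "elementary_desc \<psi> \<longleftrightarrow> (\<forall>s. \<psi> s \<in> {[], [False], [True]})"

lemma elementary_desc_meet:
  "elementary_desc \<psi> \<Longrightarrow> elementary_desc \<phi> \<Longrightarrow> elementary_desc (desc_meet \<psi> \<phi>)"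
  by (simp add: elementary_desc_def desc_meet_def)

definition desc_drop :: "('a \<Rightarrow> bool list) \<Rightarrow> ('a \<Rightarrow> bool list) \<Rightarrow> 'a \<Rightarrow> bool list" where
  "desc_drop \<phi> \<zeta> = (\<lambda>s. drop (length (\<phi> s)) (\<zeta> s))"

lemma is_prefix_wdrop_iff:
  assumes "is_prefix u x" "u = take (length u) v" "length u \<le> length v"
  shows "is_prefix v x \<longleftrightarrow> is_prefix (drop (length u) v) (wdrop u x)"
proof
  assume "is_prefix v x"
  then show "is_prefix (drop (length u) v) (wdrop u x)"
    using assms(3) by (auto simp: is_prefix_def wdrop_def add.commute)
next
  assume rest: "is_prefix (drop (length u) v) (wdrop u x)"
  have "x i = v ! i" if "i < length v" for i
  proof (cases "i < length u")
    case True
    then show ?thesis using assms(1,2) by (metis is_prefix_def nth_take)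
  next
    case False
    then have "x i = wdrop u x (i - length u)" by (simp add: wdrop_def)
    also have "\<dots> = v ! i" using rest False that by (simp add: is_prefix_def)
    finally show ?thesis .
  qed
  then show "is_prefix v x" by (simp add: is_prefix_def)
qed

lemma Phi_inv_image_brick:
  assumes "brick \<zeta> \<subseteq> brick \<phi>"
  shows "Phi_inv \<phi> ` brick \<zeta> = brick (desc_drop \<phi> \<zeta>)"
proof -
  have extends: "length (\<phi> s) \<le> length (\<zeta> s) \<and> \<phi> s = take (length (\<phi> s)) (\<zeta> s)" for s
    using assms unfolding brick_subset_iff by blast
  have mem_iff: "\<kappa> \<in> brick \<zeta> \<longleftrightarrow> Phi_inv \<phi> \<kappa> \<in> brick (desc_drop \<phi> \<zeta>)" if "\<kappa> \<in> brick \<phi>" for \<kappa>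
  proof -
    have "is_prefix (\<zeta> s) (\<kappa> s) \<longleftrightarrow> is_prefix (desc_drop \<phi> \<zeta> s) (Phi_inv \<phi> \<kappa> s)" for s
      using is_prefix_wdrop_iff[of "\<phi> s" "\<kappa> s" "\<zeta> s"] extends[of s] that
      by (simp add: brick_def desc_drop_def Phi_inv_def)
    then show ?thesis by (simp add: brick_def)
  qed
  show ?thesis
  proof
    show "Phi_inv \<phi> ` brick \<zeta> \<subseteq> brick (desc_drop \<phi> \<zeta>)"
      using mem_iff assms by auto
    show "brick (desc_drop \<phi> \<zeta>) \<subseteq> Phi_inv \<phi> ` brick \<zeta>"
    proof
      fix \<kappa> assume "\<kappa> \<in> brick (desc_drop \<phi> \<zeta>)"
      then have "Phi \<phi> \<kappa> \<in> brick \<zeta>" using mem_iff[of "Phi \<phi> \<kappa>"] by simp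
      then show "\<kappa> \<in> Phi_inv \<phi> ` brick \<zeta>" by (rule rev_image_eqI) simp
    qed
  qed
qed

lemma Phi_inv_desc_drop:
  assumes "brick \<zeta> \<subseteq> brick \<phi>"
  shows "Phi_inv (desc_drop \<phi> \<zeta>) (Phi_inv \<phi> \<kappa>) = Phi_inv \<zeta> \<kappa>"
proof (intro ext)
  fix s i
  have "length (\<phi> s) \<le> length (\<zeta> s)" using assms unfolding brick_subset_iff by blast
  then have "i + (length (\<zeta> s) - length (\<phi> s)) + length (\<phi> s) = i + length (\<zeta> s)" by simp
  then show "Phi_inv (desc_drop \<phi> \<zeta>) (Phi_inv \<phi> \<kappa>) s i = Phi_inv \<zeta> \<kappa> s i"
    by (simp add: Phi_inv_def wdrop_def desc_drop_def)
qed

lemma fin_supp_desc_drop: "fin_supp \<zeta> \<Longrightarrow> fin_supp (desc_drop \<phi> \<zeta>)"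
  unfolding fin_supp_def desc_drop_def by (rule finite_subset[rotated]) auto

section \<open>Brick partitions and their transport\<close>

definition cube_partition :: "nat \<Rightarrow> 'a bdesc set" where
  "cube_partition m = {(i, \<lambda>_. []) | i. i < m}"

lemma dyadic_partition_cube_partition: "dyadic_partition m (cube_partition m)"
  using dyadic_partition.base by (simp add: cube_partition_def)

lemma dyadic_partition_imp_brick_partition: "dyadic_partition m P \<Longrightarrow> brick_partition m P"
  by (induction rule: dyadic_partition.induct)
     (auto simp: very_elem_expansion_def brick_partition_def valid_brick_def fin_supp_def)

lemma brick_partition_valid: "brick_partition m P \<Longrightarrow> b \<in> P \<Longrightarrow> valid_brick m b"
  unfolding brick_partition_def by blast

lemma brick_partition_unique:
  "brick_partition m P \<Longrightarrow> b \<in> P \<Longrightarrow> b' \<in> P \<Longrightarrow> x \<in> bset b \<Longrightarrow> x \<in> bset b' \<Longrightarrow> b = b'"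
  unfolding brick_partition_def by blast

lemma brick_partition_cover: "brick_partition m P \<Longrightarrow> x \<in> carr m \<Longrightarrow> \<exists>b\<in>P. x \<in> bset b"
  unfolding brick_partition_def by blast

text \<open>A partition \<open>Q\<close> of \<open>C^S(m)\<close> whose bricks are moved into \<open>C^S(k)\<close> by injections \<open>e q\<close> with
  disjoint images covering \<open>C^S(k)\<close>, where \<open>E q c\<close> describes the image of a sub-brick \<open>c\<close> of \<open>q\<close>.
  Cutting a partition along \<open>Q\<close> and moving the pieces preserves very elementary expansions, so it
  maps dyadic partitions to dyadic partitions once it does so for the partition into cubes.\<close>

locale brick_transport =
  fixes m k :: nat and Q :: "'a bdesc set"
    and E :: "'a bdesc \<Rightarrow> 'a bdesc \<Rightarrow> 'a bdesc"
    and e :: "'a bdesc \<Rightarrow> 'a cmap"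
  assumes partition_Q: "brick_partition m Q"
    and image_brick: "\<And>q c. q \<in> Q \<Longrightarrow> valid_brick m c \<Longrightarrow> bset c \<subseteq> bset q \<Longrightarrow>
              valid_brick k (E q c) \<and> bset (E q c) = e q ` bset c"
    and image_inj: "\<And>q. q \<in> Q \<Longrightarrow> inj_on (e q) (bset q)"
    and image_disjoint: "\<And>q q'. q \<in> Q \<Longrightarrow> q' \<in> Q \<Longrightarrow> q \<noteq> q' \<Longrightarrow> e q ` bset q \<inter> e q' ` bset q' = {}"
    and image_cover: "carr k \<subseteq> (\<Union>q\<in>Q. e q ` bset q)"
begin

definition transport :: "'a bdesc set \<Rightarrow> 'a bdesc set" where
  "transport P = {E q (bdesc_meet b q) | b q. b \<in> P \<and> q \<in> Q \<and> bset b \<inter> bset q \<noteq> {}}"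

lemma transport_piece:
  assumes "valid_brick m b" "q \<in> Q" "bset b \<inter> bset q \<noteq> {}"
  shows "valid_brick k (E q (bdesc_meet b q))"
    and "bset (E q (bdesc_meet b q)) = e q ` (bset b \<inter> bset q)"
proof -
  have valid: "valid_brick m (bdesc_meet b q)"
    using valid_brick_bdesc_meet assms partition_Q brick_partition_valid by blast
  have meet: "bset (bdesc_meet b q) = bset b \<inter> bset q"
    using bset_Int(2)[OF assms(3)] by simp
  then show "valid_brick k (E q (bdesc_meet b q))" "bset (E q (bdesc_meet b q)) = e q ` (bset b \<inter> bset q)"
    using image_brick[OF assms(2) valid] by auto
qed

lemma transport_disjoint:
  assumes P: "brick_partition m P" and "t \<in> transport P" "t' \<in> transport P" "t \<noteq> t'"
  shows "bset t \<inter> bset t' = {}"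
proof -
  obtain b q b' q' where
      b: "b \<in> P" "q \<in> Q" "bset b \<inter> bset q \<noteq> {}" "t = E q (bdesc_meet b q)"
    and b': "b' \<in> P" "q' \<in> Q" "bset b' \<inter> bset q' \<noteq> {}" "t' = E q' (bdesc_meet b' q')"
    using assms(2,3) unfolding transport_def by blast
  have t: "bset t = e q ` (bset b \<inter> bset q)" and t': "bset t' = e q' ` (bset b' \<inter> bset q')"
    using transport_piece(2) b b' brick_partition_valid[OF P] by blast+
  show ?thesis
  proof (cases "q = q'")
    case True
    then have "b \<noteq> b'" using \<open>t \<noteq> t'\<close> b b' by blast
    then have "bset b \<inter> bset b' = {}" using b b' P by (simp add: brick_partition_def)
    then show ?thesis
      using t t' True inj_on_image_Int[OF image_inj[OF b(2)], of "bset b \<inter> bset q" "bset b' \<inter> bset q"]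
      by auto
  next
    case False
    then show ?thesis using t t' image_disjoint[OF b(2) b'(2)] by blast
  qed
qed

lemma carr_subset_transport:
  assumes P: "brick_partition m P"
  shows "carr k \<subseteq> (\<Union>t\<in>transport P. bset t)"
proof
  fix y :: "nat \<times> 'a cpt" assume "y \<in> carr k"
  then obtain q x where q: "q \<in> Q" "x \<in> bset q" "y = e q x" using image_cover by blast
  then obtain b where b: "b \<in> P" "x \<in> bset b"
    using brick_partition_cover[OF P] bset_subset_carr brick_partition_valid[OF partition_Q] by blast
  then have "bset b \<inter> bset q \<noteq> {}" "y \<in> bset (E q (bdesc_meet b q))"
    using q transport_piece(2)[OF brick_partition_valid[OF P b(1)] q(1)] by blast+
  then show "y \<in> (\<Union>t\<in>transport P. bset t)"
    using b q unfolding transport_def by blast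
qed

lemma brick_partition_transport:
  assumes P: "brick_partition m P"
  shows "brick_partition k (transport P)"
  unfolding brick_partition_def
proof (intro conjI ballI impI)
  have "transport P \<subseteq> (\<lambda>(b, q). E q (bdesc_meet b q)) ` (P \<times> Q)"
    unfolding transport_def by auto
  then show "finite (transport P)"
    using P partition_Q by (meson brick_partition_def finite_SigmaI finite_imageI finite_subset)
  show "valid_brick k t" if "t \<in> transport P" for t
    using that unfolding transport_def using transport_piece(1) brick_partition_valid[OF P] by blast
  show "bset t \<inter> bset t' = {}" if "t \<in> transport P" "t' \<in> transport P" "t \<noteq> t'" for t t'
    using transport_disjoint[OF P that] .
  show "(\<Union>t\<in>transport P. bset t) = carr k"
    using carr_subset_transport[OF P] bset_subset_carr transport_piece(1) brick_partition_valid[OF P]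
    unfolding transport_def by blast
qed

lemma very_elem_expansion_transport:
  assumes exp: "very_elem_expansion m P P'" and P: "brick_partition m P"
  shows "very_elem_expansion k (transport P) (transport P')"
  unfolding very_elem_expansion_def
proof (intro conjI ballI)
  have P': "brick_partition m P'" using exp by (simp add: very_elem_expansion_def)
  then show "brick_partition k (transport P')" by (rule brick_partition_transport)
  fix t assume "t \<in> transport P"
  then obtain b q where b: "b \<in> P" "q \<in> Q" "bset b \<inter> bset q \<noteq> {}" "t = E q (bdesc_meet b q)"
    unfolding transport_def by blast
  obtain b1 b2 where b12: "b1 \<in> P'" "b2 \<in> P'" "bset b = bset b1 \<union> bset b2"
    using exp b(1) by (auto simp: very_elem_expansion_def)
  have t: "bset t = e q ` (bset b1 \<inter> bset q) \<union> e q ` (bset b2 \<inter> bset q)"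
    using transport_piece(2)[OF brick_partition_valid[OF P b(1)] b(2,3)] b(4) b12(3) by auto
  have piece: "E q (bdesc_meet b' q) \<in> transport P' \<and>
      bset (E q (bdesc_meet b' q)) = e q ` (bset b' \<inter> bset q)"
    if "b' \<in> P'" "bset b' \<inter> bset q \<noteq> {}" for b'
    using that b(2) transport_piece(2)[OF brick_partition_valid[OF P'] b(2)]
    unfolding transport_def by blast
  show "\<exists>t1\<in>transport P'. \<exists>t2\<in>transport P'. bset t = bset t1 \<union> bset t2"
  proof (cases "bset b1 \<inter> bset q = {}")
    case True
    \<comment> \<open>then the other half of \<open>b\<close> is used twice\<close>
    then have "bset b2 \<inter> bset q \<noteq> {}" using b(3) b12(3) by blast
    then show ?thesis using t True piece[OF b12(2)] by (metis Un_absorb image_empty sup_bot.left_neutral)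
  next
    case False
    show ?thesis
    proof (cases "bset b2 \<inter> bset q = {}")
      case True
      then show ?thesis using t False piece[OF b12(1)] by (metis Un_absorb image_empty sup_bot.right_neutral)
    next
      case False2: False
      then show ?thesis using t False piece[OF b12(1)] piece[OF b12(2)] by metis
    qed
  qed
qed

lemma dyadic_partition_transport:
  assumes "dyadic_partition m P" and "dyadic_partition k (transport (cube_partition m))"
  shows "dyadic_partition k (transport P)"
  using assms(1)
proof (induction rule: dyadic_partition.induct)
  case base
  then show ?case using assms(2) by (simp add: cube_partition_def)
next
  case (step P P')
  then show ?case
    using very_elem_expansion_transport dyadic_partition_imp_brick_partition dyadic_partition.step
    by blast
qed

lemma transport_cube_partition: "transport (cube_partition m) = (\<lambda>q. E q q) ` Q"
proof
  show "transport (cube_partition m) \<subseteq> (\<lambda>q. E q q) ` Q"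
  proof
    fix t assume "t \<in> transport (cube_partition m)"
    then obtain i q where q: "q \<in> Q" "bset (i, \<lambda>_. []) \<inter> bset q \<noteq> {}"
      and t: "t = E q (bdesc_meet (i, \<lambda>_. []) q)"
      unfolding transport_def cube_partition_def by blast
    have "i = fst q" using bset_Int(1)[OF q(2)] by simp
    then show "t \<in> (\<lambda>q. E q q) ` Q" using q(1) t bdesc_meet_cube[of q] by simp
  qed
next
  show "(\<lambda>q. E q q) ` Q \<subseteq> transport (cube_partition m)"
  proof
    fix t assume "t \<in> (\<lambda>q. E q q) ` Q"
    then obtain q where q: "q \<in> Q" "t = E q q" by blast
    have "(fst q, \<lambda>_. []) \<in> cube_partition m"
      using brick_partition_valid[OF partition_Q q(1)] by (simp add: valid_brick_def cube_partition_def)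
    moreover have "bset q \<subseteq> bset (fst q, \<lambda>_. [])"
      by (auto simp: bset_def brick_def is_prefix_def)
    then have "bset (fst q, \<lambda>_. []) \<inter> bset q \<noteq> {}"
      using bset_nonempty[of q] by blast
    moreover have "t = E q (bdesc_meet (fst q, \<lambda>_. []) q)"
      using q(2) bdesc_meet_cube[of q] by simp
    ultimately show "t \<in> transport (cube_partition m)"
      unfolding transport_def using q(1) by blast
  qed
qed

lemma transport_refining:
  assumes "\<forall>b\<in>P. \<exists>q\<in>Q. bset b \<subseteq> bset q"
  shows "transport P = {E q b | b q. b \<in> P \<and> q \<in> Q \<and> bset b \<subseteq> bset q}"
proof -
  have meets_iff: "bset b \<inter> bset q \<noteq> {} \<longleftrightarrow> bset b \<subseteq> bset q" if bq: "b \<in> P" "q \<in> Q" for b q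
  proof
    assume meet: "bset b \<inter> bset q \<noteq> {}"
    obtain q' where q': "q' \<in> Q" "bset b \<subseteq> bset q'" using assms bq(1) by blast
    then obtain x where "x \<in> bset q'" "x \<in> bset q" using meet by blast
    then have "q' = q" using brick_partition_unique[OF partition_Q q'(1) bq(2)] by simp
    then show "bset b \<subseteq> bset q" using q' by simp
  next
    assume "bset b \<subseteq> bset q"
    then show "bset b \<inter> bset q \<noteq> {}" using bset_nonempty[of b] by blast
  qed
  show ?thesis
    unfolding transport_def
  proof (intro Collect_cong iffI)
    fix t assume "\<exists>b q. t = E q (bdesc_meet b q) \<and> b \<in> P \<and> q \<in> Q \<and> bset b \<inter> bset q \<noteq> {}"
    then obtain b q where "t = E q (bdesc_meet b q)" "b \<in> P" "q \<in> Q" "bset b \<subseteq> bset q"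
      using meets_iff by blast
    then show "\<exists>b q. t = E q b \<and> b \<in> P \<and> q \<in> Q \<and> bset b \<subseteq> bset q"
      by (intro exI[of _ b] exI[of _ q]) (simp add: bdesc_meet_subset)
  next
    fix t assume "\<exists>b q. t = E q b \<and> b \<in> P \<and> q \<in> Q \<and> bset b \<subseteq> bset q"
    then obtain b q where "t = E q b" "b \<in> P" "q \<in> Q" "bset b \<subseteq> bset q" by blast
    then show "\<exists>b q. t = E q (bdesc_meet b q) \<and> b \<in> P \<and> q \<in> Q \<and> bset b \<inter> bset q \<noteq> {}"
      by (intro exI[of _ b] exI[of _ q]) (simp add: bdesc_meet_subset meets_iff)
  qed
qed

end

definition partition_meet :: "'a bdesc set \<Rightarrow> 'a bdesc set \<Rightarrow> 'a bdesc set" where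
  "partition_meet P Q = {bdesc_meet b q | b q. b \<in> P \<and> q \<in> Q \<and> bset b \<inter> bset q \<noteq> {}}"

lemma dyadic_partition_meet:
  assumes P: "dyadic_partition m P" and Q: "dyadic_partition m Q"
  shows "dyadic_partition m (partition_meet P Q)"
proof -
  have Q': "brick_partition m Q" using Q dyadic_partition_imp_brick_partition by blast
  interpret brick_transport m m Q "\<lambda>q c. c" "\<lambda>q. id"
    by unfold_locales (use Q' brick_partition_cover in \<open>auto simp: brick_partition_def\<close>)
  have "transport = (\<lambda>P. partition_meet P Q)"
    by (simp add: fun_eq_iff transport_def partition_meet_def)
  then show ?thesis
    using dyadic_partition_transport[OF P] transport_cube_partition Q by simp
qed

lemma same_brick_partition_meet:
  "(\<exists>t\<in>partition_meet P Q. x \<in> bset t \<and> y \<in> bset t) \<longleftrightarrow>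
     (\<exists>b\<in>P. x \<in> bset b \<and> y \<in> bset b) \<and> (\<exists>q\<in>Q. x \<in> bset q \<and> y \<in> bset q)"
proof
  assume "\<exists>t\<in>partition_meet P Q. x \<in> bset t \<and> y \<in> bset t"
  then obtain b q where "b \<in> P" "q \<in> Q" "bset b \<inter> bset q \<noteq> {}"
      "x \<in> bset (bdesc_meet b q)" "y \<in> bset (bdesc_meet b q)"
    unfolding partition_meet_def by blast
  then show "(\<exists>b\<in>P. x \<in> bset b \<and> y \<in> bset b) \<and> (\<exists>q\<in>Q. x \<in> bset q \<and> y \<in> bset q)"
    using bset_Int(2) by blast
next
  assume "(\<exists>b\<in>P. x \<in> bset b \<and> y \<in> bset b) \<and> (\<exists>q\<in>Q. x \<in> bset q \<and> y \<in> bset q)"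
  then obtain b q where bq: "b \<in> P" "q \<in> Q" "x \<in> bset b \<inter> bset q" "y \<in> bset b \<inter> bset q"
    by blast
  then have "bset b \<inter> bset q \<noteq> {}" by blast
  then have "bdesc_meet b q \<in> partition_meet P Q" "bset (bdesc_meet b q) = bset b \<inter> bset q"
    using bq(1,2) bset_Int(2) unfolding partition_meet_def by blast+
  then show "\<exists>t\<in>partition_meet P Q. x \<in> bset t \<and> y \<in> bset t" using bq(3,4) by auto
qed

lemma elementary_partition_meet:
  assumes "\<forall>b\<in>P. elementary_desc (snd b)" "\<forall>q\<in>Q. elementary_desc (snd q)"
  shows "\<forall>t\<in>partition_meet P Q. elementary_desc (snd t)"
  using assms elementary_desc_meet unfolding partition_meet_def bdesc_meet_def by fastforce

section \<open>Topology of bricks\<close>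

lemma topspace_CS_top [simp]: "topspace (CS_top :: 'a cpt topology) = UNIV"
  by (simp add: CS_top_def cantor_top_def)

lemma topspace_cubes [simp]: "topspace (cubes m :: (nat \<times> 'a cpt) topology) = carr m"
  by (auto simp: cubes_def carr_def)

lemma continuous_map_digit:
  "continuous_map (CS_top :: 'a cpt topology) (discrete_topology UNIV) (\<lambda>\<kappa>. \<kappa> s i)"
proof -
  have "continuous_map (CS_top :: 'a cpt topology) cantor_top (\<lambda>\<kappa>. \<kappa> s)"
    unfolding CS_top_def by (rule continuous_map_product_projection) simp
  moreover have "continuous_map cantor_top (discrete_topology UNIV) (\<lambda>x. x i)"
    unfolding cantor_top_def by (rule continuous_map_product_projection) simp
  ultimately show ?thesis using continuous_map_compose by (fastforce simp: o_def)
qed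

lemma continuous_map_CS_top_iff:
  "continuous_map X CS_top f \<longleftrightarrow> (\<forall>s i. continuous_map X (discrete_topology UNIV) (\<lambda>x. f x s i))"
  by (simp add: CS_top_def cantor_top_def continuous_map_componentwise_UNIV)

lemma continuous_map_Phi_inv: "continuous_map (CS_top :: 'a cpt topology) CS_top (Phi_inv \<psi>)"
  unfolding continuous_map_CS_top_iff Phi_inv_def wdrop_def by (intro allI continuous_map_digit)

lemma continuous_map_Phi: "continuous_map (CS_top :: 'a cpt topology) CS_top (Phi \<psi>)"
  unfolding continuous_map_CS_top_iff
proof (intro allI)
  fix s i
  show "continuous_map CS_top (discrete_topology UNIV) (\<lambda>\<kappa>. Phi \<psi> \<kappa> s i)"
    using continuous_map_digit[of s "i - length (\<psi> s)"] by (simp add: Phi_def wcat_def)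
qed

lemma openin_digit: "openin (CS_top :: 'a cpt topology) {\<kappa>. \<kappa> s i = b}"
  using openin_continuous_map_preimage[OF continuous_map_digit, of "{b}" s i] by simp

lemma openin_brick:
  assumes "fin_supp \<psi>"
  shows "openin (CS_top :: 'a cpt topology) (brick \<psi>)"
proof -
  define J where "J = {(s, i). \<psi> s \<noteq> [] \<and> i < length (\<psi> s)}"
  have "finite J"
    using assms unfolding fin_supp_def J_def
    by (rule finite_subset[rotated, OF finite_SigmaI[where B = "\<lambda>s. {..<length (\<psi> s)}"]]) auto
  then have "openin CS_top ((\<Inter>(s, i)\<in>J. {\<kappa> :: 'a cpt. \<kappa> s i = \<psi> s ! i}) \<inter> topspace CS_top)"
    by (rule openin_INT) (auto intro: openin_digit)
  moreover have "(\<Inter>(s, i)\<in>J. {\<kappa> :: 'a cpt. \<kappa> s i = \<psi> s ! i}) \<inter> topspace CS_top = brick \<psi>"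
    by (auto simp: J_def brick_def is_prefix_def)
  ultimately show ?thesis by simp
qed

lemma openin_bset:
  assumes "valid_brick m b"
  shows "openin (cubes m :: (nat \<times> 'a cpt) topology) (bset b)"
  unfolding cubes_def openin_sum_topology
proof (intro conjI ballI)
  show "bset b \<subseteq> Sigma {..<m} (topspace \<circ> (\<lambda>_. CS_top))"
    using assms by (auto simp: bset_def valid_brick_def)
  fix i
  have "{x. (i, x) \<in> bset b} = (if i = fst b then brick (snd b) else {})"
    by (auto simp: bset_def)
  then show "openin CS_top {x. (i, x) \<in> bset b}"
    using assms openin_brick[of "snd b"] by (simp add: valid_brick_def)
qed

lemma homeomorphic_map_cubes_in_carr:
  "homeomorphic_map (cubes m) (cubes n) f \<Longrightarrow> x \<in> carr m \<Longrightarrow> f x \<in> (carr n :: (nat \<times> 'a cpt) set)"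
  for f :: "'a cmap"
  using homeomorphic_imp_surjective_map[of "cubes m" "cubes n" f] by auto

lemma homeomorphic_map_cubes_inj_on:
  "homeomorphic_map (cubes m) (cubes n) f \<Longrightarrow> inj_on f (carr m :: (nat \<times> 'a cpt) set)"
  for f :: "'a cmap"
  using homeomorphic_imp_injective_map[of "cubes m" "cubes n" f] by auto

lemma homeomorphic_map_cubes_image:
  "homeomorphic_map (cubes m) (cubes n) f \<Longrightarrow> f ` carr m = (carr n :: (nat \<times> 'a cpt) set)"
  for f :: "'a cmap"
  using homeomorphic_imp_surjective_map[of "cubes m" "cubes n" f] by auto

section \<open>Multicolored forests\<close>

definition forest_map :: "nat \<Rightarrow> nat \<Rightarrow> (nat \<Rightarrow> 'a bdesc) \<Rightarrow> 'a cmap" where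
  "forest_map m n B = restrict (\<lambda>x. let j = (SOME j. j < n \<and> x \<in> bset (B j))
     in (j, Phi_inv (snd (B j)) (snd x))) (carr m)"

definition forest_map_inv :: "nat \<Rightarrow> (nat \<Rightarrow> 'a bdesc) \<Rightarrow> 'a cmap" where
  "forest_map_inv n B = restrict (\<lambda>y. (fst (B (fst y)), Phi (snd (B (fst y))) (snd y))) (carr n)"

locale indexed_partition =
  fixes m n :: nat and B :: "nat \<Rightarrow> 'a bdesc"
  assumes partition: "brick_partition m (B ` {..<n})" and inj_B: "inj_on B {..<n}"
begin

lemma valid: "j < n \<Longrightarrow> valid_brick m (B j)"
  using brick_partition_valid[OF partition] by blast

lemma unique: "j < n \<Longrightarrow> j' < n \<Longrightarrow> x \<in> bset (B j) \<Longrightarrow> x \<in> bset (B j') \<Longrightarrow> j = j'"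
  using brick_partition_unique[OF partition] inj_B by (metis imageI inj_onD lessThan_iff)

lemma cover: "x \<in> carr m \<Longrightarrow> \<exists>j<n. x \<in> bset (B j)"
  using brick_partition_cover[OF partition] by blast

lemma bset_B_subset_carr: "j < n \<Longrightarrow> bset (B j) \<subseteq> carr m"
  using bset_subset_carr valid by blast

lemma forest_map_eq:
  assumes "j < n" "x \<in> bset (B j)"
  shows "forest_map m n B x = (j, Phi_inv (snd (B j)) (snd x))"
proof -
  have "(SOME j. j < n \<and> x \<in> bset (B j)) = j"
    using assms unique by blast
  moreover have "x \<in> carr m" using assms bset_B_subset_carr by blast
  ultimately show ?thesis by (simp add: forest_map_def Let_def)
qed

lemma forest_map_in_carr: "x \<in> carr m \<Longrightarrow> forest_map m n B x \<in> carr n"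
  using cover[of x] forest_map_eq by (metis fst_conv mem_carr_iff)

lemma forest_map_inv_eq: "j < n \<Longrightarrow> forest_map_inv n B (j, \<kappa>) = (fst (B j), Phi (snd (B j)) \<kappa>)"
  by (simp add: forest_map_inv_def)

lemma forest_map_inv_in_bset: "j < n \<Longrightarrow> forest_map_inv n B (j, \<kappa>) \<in> bset (B j)"
  by (simp add: forest_map_inv_eq bset_def)

lemma forest_map_inv_forest_map: "x \<in> carr m \<Longrightarrow> forest_map_inv n B (forest_map m n B x) = x"
proof -
  assume "x \<in> carr m"
  then obtain j where j: "j < n" "x \<in> bset (B j)" using cover by blast
  then have "fst x = fst (B j)" "snd x \<in> brick (snd (B j))" by (auto simp: bset_def)
  then show ?thesis using j by (simp add: forest_map_eq forest_map_inv_eq Phi_Phi_inv prod_eq_iff)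
qed

lemma forest_map_forest_map_inv: "y \<in> carr n \<Longrightarrow> forest_map m n B (forest_map_inv n B y) = y"
  using forest_map_eq[OF _ forest_map_inv_in_bset] by (cases y) (simp add: forest_map_inv_eq)

lemma continuous_map_forest_map: "continuous_map (cubes m) (cubes n) (forest_map m n B)"
  unfolding continuous_map_def
proof (intro conjI allI impI)
  show "forest_map m n B \<in> topspace (cubes m) \<rightarrow> topspace (cubes n)"
    using forest_map_in_carr by auto
next
  fix U :: "(nat \<times> 'a cpt) set" assume U: "openin (cubes n) U"
  let ?piece = "\<lambda>j. bset (B j) \<inter> {x \<in> carr m. (j, Phi_inv (snd (B j)) (snd x)) \<in> U}"
  have "{x \<in> topspace (cubes m). forest_map m n B x \<in> U} = (\<Union>j<n. ?piece j)"
    using cover forest_map_eq by fastforce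
  moreover have "openin (cubes m) (?piece j)" if j: "j < n" for j
  proof (rule openin_Int)
    show "openin (cubes m) (bset (B j))" using openin_bset valid j by blast
    have "openin CS_top {\<kappa>. (j, \<kappa>) \<in> U}"
      using U j unfolding cubes_def openin_sum_topology by auto
    then have "openin CS_top {\<kappa>. (j, Phi_inv (snd (B j)) \<kappa>) \<in> U}"
      using openin_continuous_map_preimage[OF continuous_map_Phi_inv] by fastforce
    then show "openin (cubes m) {x \<in> carr m. (j, Phi_inv (snd (B j)) (snd x)) \<in> U}"
      unfolding cubes_def openin_sum_topology by (auto simp: carr_def)
  qed
  ultimately show "openin (cubes m) {x \<in> topspace (cubes m). forest_map m n B x \<in> U}"
    by (auto intro: openin_Union)
qed

lemma continuous_map_forest_map_inv: "continuous_map (cubes n) (cubes m) (forest_map_inv n B)"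
  unfolding continuous_map_def
proof (intro conjI allI impI)
  show "forest_map_inv n B \<in> topspace (cubes n) \<rightarrow> topspace (cubes m)"
    using forest_map_inv_in_bset bset_B_subset_carr by fastforce
next
  fix U :: "(nat \<times> 'a cpt) set" assume U: "openin (cubes m) U"
  show "openin (cubes n) {y \<in> topspace (cubes n). forest_map_inv n B y \<in> U}"
    unfolding cubes_def openin_sum_topology
  proof (intro conjI ballI)
    fix j assume j: "j \<in> {..<n}"
    have "openin CS_top {\<kappa>. (fst (B j), \<kappa>) \<in> U}"
      using U valid[of j] j unfolding cubes_def openin_sum_topology by (auto simp: valid_brick_def)
    then have "openin CS_top {\<kappa>. (fst (B j), Phi (snd (B j)) \<kappa>) \<in> U}"
      using openin_continuous_map_preimage[OF continuous_map_Phi] by fastforce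
    then show "openin CS_top {\<kappa>. (j, \<kappa>) \<in> {y \<in> topspace (sum_topology (\<lambda>_. CS_top) {..<n}). forest_map_inv n B y \<in> U}}"
      using j by (simp add: forest_map_inv_eq)
  qed auto
qed

lemma homeomorphic_map_forest_map: "homeomorphic_map (cubes m) (cubes n) (forest_map m n B)"
  by (rule homeomorphic_maps_imp_map[where g = "forest_map_inv n B"])
    (simp add: homeomorphic_maps_def continuous_map_forest_map continuous_map_forest_map_inv
      forest_map_inv_forest_map forest_map_forest_map_inv)

end

lemma mc_forest_via_forest_map:
  assumes "dyadic_partition m (B ` {..<n})" "inj_on B {..<n}"
  shows "mc_forest_via m n (forest_map m n B) B"
proof -
  interpret indexed_partition m n B
    using assms dyadic_partition_imp_brick_partition by unfold_locales auto
  show ?thesis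
    unfolding mc_forest_via_def
    using homeomorphic_map_forest_map assms forest_map_eq by (auto simp: forest_map_def)
qed

lemma ex_mc_forest_via_bricks:
  assumes "dyadic_partition m M"
  shows "\<exists>n B. mc_forest_via m n (forest_map m n B) B \<and> B ` {..<n} = M"
proof -
  have "finite M" using assms dyadic_partition_imp_brick_partition brick_partition_def by blast
  then obtain B where "bij_betw B {..<card M} M"
    using ex_bij_betw_nat_finite lessThan_atLeast0 by metis
  then have "B ` {..<card M} = M" "inj_on B {..<card M}" by (auto simp: bij_betw_def)
  then show ?thesis
    using assms mc_forest_via_forest_map by metis
qed

locale mc_forest_on =
  fixes m n :: nat and f :: "'a cmap" and B :: "nat \<Rightarrow> 'a bdesc"
  assumes forest: "mc_forest_via m n f B"
begin

sublocale indexed_partition m n B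
  using forest dyadic_partition_imp_brick_partition by unfold_locales (auto simp: mc_forest_via_def)

lemma homeo: "homeomorphic_map (cubes m) (cubes n) f"
  and f_extensional: "f \<in> extensional (carr m)"
  and dyadic: "dyadic_partition m (B ` {..<n})"
  and f_on_brick: "j < n \<Longrightarrow> x \<in> bset (B j) \<Longrightarrow> f x = (j, Phi_inv (snd (B j)) (snd x))"
  using forest by (auto simp: mc_forest_via_def)

lemma fst_eq_iff: "x \<in> carr m \<Longrightarrow> j < n \<Longrightarrow> fst (f x) = j \<longleftrightarrow> x \<in> bset (B j)"
  using cover unique f_on_brick by (metis fst_conv)

lemma same_fibre_iff:
  assumes "x \<in> carr m" "y \<in> carr m"
  shows "fst (f x) = fst (f y) \<longleftrightarrow> (\<exists>b\<in>B ` {..<n}. x \<in> bset b \<and> y \<in> bset b)"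
proof -
  obtain j where j: "j < n" "x \<in> bset (B j)" using cover assms(1) by blast
  then have "fst (f x) = fst (f y) \<longleftrightarrow> y \<in> bset (B j)"
    using fst_eq_iff[OF assms(1) j(1)] fst_eq_iff[OF assms(2) j(1)] by auto
  also have "\<dots> \<longleftrightarrow> (\<exists>b\<in>B ` {..<n}. x \<in> bset b \<and> y \<in> bset b)"
    using j unique by blast
  finally show ?thesis .
qed

lemma same_fibre_imp_same_cube:
  assumes "x \<in> carr m" "y \<in> carr m" "fst (f x) = fst (f y)"
  shows "fst x = fst y"
proof -
  obtain b where "x \<in> bset b" "y \<in> bset b" using same_fibre_iff assms by blast
  then show ?thesis by (auto simp: bset_def)
qed

lemma bset_eq_fibre:
  assumes "j < n" "x0 \<in> bset (B j)"
  shows "bset (B j) = {x \<in> carr m. fst (f x) = fst (f x0)}"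
proof -
  have "fst (f x0) = j" using f_on_brick assms by simp
  then show ?thesis using fst_eq_iff[OF _ assms(1)] bset_B_subset_carr[OF assms(1)] by auto
qed

lemma rank_pos: "1 \<le> m \<Longrightarrow> 1 \<le> n"
  using cover[of "(0, \<lambda>_ _. False)"] by auto

lemma image_subbrick:
  assumes "i < n" "valid_brick m c" "bset c \<subseteq> bset (B i)"
  shows "valid_brick n (i, desc_drop (snd (B i)) (snd c))"
    and "f ` bset c = bset (i, desc_drop (snd (B i)) (snd c))"
proof -
  show "valid_brick n (i, desc_drop (snd (B i)) (snd c))"
    using assms fin_supp_desc_drop by (auto simp: valid_brick_def)
  have sub: "fst c = fst (B i)" "brick (snd c) \<subseteq> brick (snd (B i))"
    using bset_subsetD[OF assms(3)] by auto
  have "f ` bset c = Pair i ` Phi_inv (snd (B i)) ` brick (snd c)"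
    using assms(3) f_on_brick[OF assms(1)] by (force simp: bset_eq_image[of c] sub(1))
  also have "\<dots> = bset (i, desc_drop (snd (B i)) (snd c))"
    using Phi_inv_image_brick[OF sub(2)] by (simp add: bset_eq_image)
  finally show "f ` bset c = bset (i, desc_drop (snd (B i)) (snd c))" .
qed

end

section \<open>The order on classes of forests\<close>

lemma twist_cube_id: "twist \<psi> (\<lambda>_. []) id = Phi_inv \<psi>"
  by (auto simp: twist_def Phi_def wcat_def tau_def)

lemma mc_forest_via_SV:
  assumes F: "mc_forest_via m n f B" and G: "perm_subgroup G" and m: "1 \<le> m"
  shows "SV G m n f"
proof -
  interpret mc_forest_on m n f B by (rule mc_forest_on.intro[OF F])
  let ?Q = "\<lambda>j. (j, \<lambda>_. []) :: 'a bdesc"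
  have valid_bricks: "\<forall>j<n. valid_brick m (B j) \<and> valid_brick n (?Q j) \<and> id \<in> G"
    using valid G by (simp add: valid_brick_def fin_supp_def perm_subgroup_def)
  have disjoint: "\<forall>j<n. \<forall>j'<n. j \<noteq> j' \<longrightarrow> bset (B j) \<inter> bset (B j') = {} \<and> bset (?Q j) \<inter> bset (?Q j') = {}"
    using unique by auto
  have cover_m: "(\<Union>j<n. bset (B j)) = carr m"
    using cover bset_B_subset_carr by blast
  have cover_n: "(\<Union>j<n. bset (?Q j)) = carr n"
    by auto
  have twists: "\<forall>j<n. \<forall>x\<in>bset (B j). f x = (fst (?Q j), twist (snd (B j)) (snd (?Q j)) id (snd x))"
    using f_on_brick by (simp add: twist_cube_id)
  show ?thesis
    unfolding SV_def
    apply (intro conjI m rank_pos[OF m] homeo f_extensional)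
    apply (rule exI[of _ n], rule exI[of _ B], rule exI[of _ ?Q], rule exI[of _ "\<lambda>_. id"])
    using valid_bricks disjoint cover_m cover_n twists by (intro conjI)
qed

lemma inj_tau: "bij g \<Longrightarrow> inj (tau g)"
  unfolding inj_def tau_def by (metis bij_inv_eq_iff ext)

lemma twisted_perm_on_indices:
  assumes G: "perm_subgroup G" and p: "p \<in> twisted_perms G n"
  obtains \<sigma> where "inj \<sigma>" "\<And>y. y \<in> carr n \<Longrightarrow> p y \<in> carr n \<and> fst (p y) = \<sigma> (fst y)"
    "inj_on p (carr n)"
proof -
  obtain \<sigma> \<gamma> where p: "p = twperm n \<sigma> \<gamma>" "\<sigma> permutes {..<n}" "\<forall>i<n. \<gamma> i \<in> G"
    using p unfolding twisted_perms_def by blast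
  have \<sigma>: "inj \<sigma>" "\<And>i. i < n \<Longrightarrow> \<sigma> i < n"
    using permutes_inj[OF p(2)] permutes_in_image[OF p(2)] by auto
  have p_eq: "p (i, \<kappa>) = (\<sigma> i, tau (\<gamma> (\<sigma> i)) \<kappa>)" if "i < n" for i \<kappa>
    using that by (simp add: p(1) twperm_def)
  have inj_tau_\<gamma>: "inj (tau (\<gamma> (\<sigma> i)))" if "i < n" for i
    using inj_tau G p(3) \<sigma>(2)[OF that] unfolding perm_subgroup_def by blast
  have maps: "p y \<in> carr n \<and> fst (p y) = \<sigma> (fst y)" if "y \<in> carr n" for y
    using that \<sigma>(2) p_eq[of "fst y" "snd y"] by simp
  have "inj_on p (carr n)"
  proof (rule inj_onI)
    fix y z assume y: "y \<in> carr n" and z: "z \<in> carr n" and eq: "p y = p z"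
    then have "fst y = fst z" using maps \<sigma>(1) by (metis injD)
    moreover have "snd (p y) = snd (p z)" using eq by simp
    then have "tau (\<gamma> (\<sigma> (fst y))) (snd y) = tau (\<gamma> (\<sigma> (fst z))) (snd z)"
      using y z p_eq[of "fst y" "snd y"] p_eq[of "fst z" "snd z"] by simp
    ultimately show "y = z"
      using inj_tau_\<gamma>[of "fst y"] y by (simp add: inj_eq prod_eq_iff)
  qed
  with \<sigma>(1) maps show thesis by (rule that)
qed

lemma mem_cls_self:
  assumes G: "perm_subgroup G" and "h \<in> extensional (carr m)" "h ` carr m \<subseteq> carr n"
  shows "h \<in> cls G m n h"
proof -
  have id_perm: "twperm n id (\<lambda>_. id) \<in> twisted_perms G n"
    using G permutes_id unfolding twisted_perms_def perm_subgroup_def by blast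
  have comp: "compose (carr m) (twperm n id (\<lambda>_. id)) h = h"
  proof
    fix x show "compose (carr m) (twperm n id (\<lambda>_. id)) h x = h x"
    proof (cases "x \<in> carr m")
      case True
      then have "h x \<in> carr n" using assms(3) by blast
      then show ?thesis using True by (simp add: compose_eq twperm_def tau_def split_beta)
    next
      case False
      then show ?thesis using extensional_arb[OF assms(2) False] by (simp add: compose_def)
    qed
  qed
  show ?thesis
    unfolding cls_def by (intro CollectI exI[of _ "twperm n id (\<lambda>_. id)"]) (simp add: id_perm comp)
qed

text \<open>Twisted permutations only rename the cubes, so all members of a class have the same fibres
  over the cubes.\<close>

lemma mem_cls_fibres:
  assumes G: "perm_subgroup G" and h: "h \<in> cls G m n f" and f: "f ` carr m \<subseteq> carr n"
  shows "h \<in> extensional (carr m)"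
    and "inj_on f (carr m) \<Longrightarrow> inj_on h (carr m)"
    and "x \<in> carr m \<Longrightarrow> y \<in> carr m \<Longrightarrow> fst (h x) = fst (h y) \<longleftrightarrow> fst (f x) = fst (f y)"
proof -
  obtain p where p: "p \<in> twisted_perms G n" "h = compose (carr m) p f"
    using h unfolding cls_def by blast
  obtain \<sigma> where \<sigma>: "inj \<sigma>" "\<And>y. y \<in> carr n \<Longrightarrow> p y \<in> carr n \<and> fst (p y) = \<sigma> (fst y)"
    "inj_on p (carr n)"
    using twisted_perm_on_indices[OF G p(1)] by blast
  have h_eq: "h x = p (f x)" if "x \<in> carr m" for x
    using p(2) that by (simp add: compose_eq)
  show "h \<in> extensional (carr m)" using p(2) by (simp add: compose_extensional)
  show "inj_on f (carr m) \<Longrightarrow> inj_on h (carr m)"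
    using comp_inj_on[OF _ inj_on_subset[OF \<sigma>(3) f]] inj_on_cong[of "carr m" h "p \<circ> f"] h_eq
    by simp
  show "fst (h x) = fst (h y) \<longleftrightarrow> fst (f x) = fst (f y)" if "x \<in> carr m" "y \<in> carr m"
  proof -
    have "f x \<in> carr n" "f y \<in> carr n" using that f by blast+
    then have "fst (h x) = \<sigma> (fst (f x))" "fst (h y) = \<sigma> (fst (f y))"
      using that h_eq \<sigma>(2) by simp_all
    then show ?thesis using \<sigma>(1) by (simp add: inj_eq)
  qed
qed

text \<open>Points outside \<open>C^S(a)\<close> are all sent to \<open>undefined\<close>, so injectivity fails on them.\<close>

lemma extensional_inj_on_carr_le:
  assumes "h \<in> extensional (carr a)" "inj_on h (carr b :: (nat \<times> 'a cpt) set)"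
  shows "b \<le> a"
proof (rule ccontr)
  assume "\<not> b \<le> a"
  define F T :: "'a cpt" where "F = (\<lambda>_ _. False)" and "T = (\<lambda>_ _. True)"
  have in_b: "(a, F) \<in> carr b" "(a, T) \<in> carr b" using \<open>\<not> b \<le> a\<close> by simp_all
  have "h (a, F) = h (a, T)" using extensional_arb[OF assms(1)] by simp
  then have "(a, F) = (a, T)" using inj_onD[OF assms(2) _ in_b] by blast
  then show False by (simp add: F_def T_def fun_eq_iff)
qed

lemma cls_eq_imp_same_corank:
  assumes G: "perm_subgroup G" and eq: "cls G m n f = cls G m' n' h"
    and f: "homeomorphic_map (cubes m) (cubes n) f"
    and h: "homeomorphic_map (cubes m') (cubes n') h" "h \<in> extensional (carr m')"
  shows "m' = m" and "h \<in> cls G m n f"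
proof -
  have "h \<in> cls G m' n' h"
    using mem_cls_self[OF G h(2)] homeomorphic_map_cubes_image[OF h(1)] by simp
  then show h_cls: "h \<in> cls G m n f" using eq by simp
  have "h \<in> extensional (carr m)" "inj_on h (carr m)"
    using mem_cls_fibres(1,2)[OF G h_cls] homeomorphic_map_cubes_image[OF f]
      homeomorphic_map_cubes_inj_on[OF f] by auto
  then show "m' = m"
    using extensional_inj_on_carr_le h(2) homeomorphic_map_cubes_inj_on[OF h(1)] le_antisym by metis
qed

definition fibre_refines :: "nat \<Rightarrow> 'a cmap \<Rightarrow> 'a cmap \<Rightarrow> bool" where
  "fibre_refines m g f \<longleftrightarrow> (\<forall>x\<in>carr m. \<forall>y\<in>carr m. fst (g x) = fst (g y) \<longrightarrow> fst (f x) = fst (f y))"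

lemma cls_le_imp_fibre_refines:
  assumes G: "perm_subgroup G"
    and le: "cls_le G (cls G m n1 f1) (cls G m n2 f2)"
    and f1: "homeomorphic_map (cubes m) (cubes n1) f1" "f1 \<in> extensional (carr m)"
    and f2: "homeomorphic_map (cubes m) (cubes n2) f2" "f2 \<in> extensional (carr m)"
  shows "fibre_refines m f2 f1"
proof -
  obtain m' n h n' f where SV: "SV G m' n h" and "mc_forest n n' f"
    and cls1: "cls G m n1 f1 = cls G m' n h"
    and cls2: "cls G m n2 f2 = cls G m' n' (compose (carr m') f h)"
    using le unfolding cls_le_def by blast
  then obtain B where "mc_forest_via n n' f B" unfolding mc_forest_def by blast
  then interpret F: mc_forest_on n n' f B by (rule mc_forest_on.intro)
  have h: "homeomorphic_map (cubes m') (cubes n) h" "h \<in> extensional (carr m')"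
    using SV unfolding SV_def by auto
  have "m' = m" and "h \<in> cls G m n1 f1"
    using cls_eq_imp_same_corank[OF G cls1 f1(1) h] by auto
  note h_fibres = mem_cls_fibres(3)[OF G this(2) homeomorphic_map_cubes_image[OF f1(1), THEN equalityD1]]
  from \<open>m' = m\<close> have h_maps: "h ` carr m \<subseteq> carr n"
    using homeomorphic_map_cubes_image[OF h(1)] by simp
  have fh_maps: "compose (carr m) f h ` carr m \<subseteq> carr n'"
  proof (rule image_subsetI)
    fix x :: "nat \<times> 'a cpt" assume x: "x \<in> carr m"
    then have "h x \<in> carr n" using h_maps by blast
    then show "compose (carr m) f h x \<in> carr n'"
      using x homeomorphic_map_cubes_in_carr[OF F.homeo] by (simp add: compose_eq)
  qed
  have "f2 \<in> cls G m n2 f2"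
    using mem_cls_self[OF G f2(2)] homeomorphic_map_cubes_image[OF f2(1)] by simp
  then have "f2 \<in> cls G m n' (compose (carr m) f h)"
    using cls2 \<open>m' = m\<close> by simp
  note f2_fibres = mem_cls_fibres(3)[OF G this fh_maps]
  show ?thesis
    unfolding fibre_refines_def
  proof (intro ballI impI)
    fix x y assume x: "x \<in> carr m" and y: "y \<in> carr m" and "fst (f2 x) = fst (f2 y)"
    then have "fst (f (h x)) = fst (f (h y))"
      using f2_fibres by (simp add: compose_eq)
    moreover have "h x \<in> carr n" "h y \<in> carr n" using h_maps x y by blast+
    ultimately have "fst (h x) = fst (h y)"
      using F.same_fibre_imp_same_cube by blast
    then show "fst (f1 x) = fst (f1 y)"
      using h_fibres x y by simp
  qed
qed

lemma fibre_refines_brick_subset: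
  assumes F: "mc_forest_via m n f B" and Fg: "mc_forest_via m k g Bg"
    and R: "fibre_refines m g f" and j: "j < k"
  shows "\<exists>i<n. bset (Bg j) \<subseteq> bset (B i)"
proof -
  interpret F: mc_forest_on m n f B by (rule mc_forest_on.intro[OF F])
  interpret Fg: mc_forest_on m k g Bg by (rule mc_forest_on.intro[OF Fg])
  obtain x0 where x0: "x0 \<in> bset (Bg j)" using bset_nonempty by blast
  then have "x0 \<in> carr m" using Fg.bset_B_subset_carr[OF j] by blast
  then obtain i where i: "i < n" "x0 \<in> bset (B i)" using F.cover by blast
  have "bset (Bg j) = {x \<in> carr m. fst (g x) = fst (g x0)}" using Fg.bset_eq_fibre[OF j x0] .
  also have "\<dots> \<subseteq> {x \<in> carr m. fst (f x) = fst (f x0)}"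
    using R \<open>x0 \<in> carr m\<close> unfolding fibre_refines_def by blast
  also have "\<dots> = bset (B i)" using F.bset_eq_fibre[OF i] by simp
  finally show ?thesis using i(1) by blast
qed

definition forest_image_desc :: "nat \<Rightarrow> (nat \<Rightarrow> 'a bdesc) \<Rightarrow> 'a bdesc \<Rightarrow> 'a bdesc \<Rightarrow> 'a bdesc" where
  "forest_image_desc n B q c = (inv_into {..<n} B q, desc_drop (snd q) (snd c))"

context mc_forest_on
begin

lemma forest_image_desc_brick:
  "i < n \<Longrightarrow> forest_image_desc n B (B i) c = (i, desc_drop (snd (B i)) (snd c))"
  using inj_B by (simp add: forest_image_desc_def inv_into_f_f)

lemma brick_transport_forest: "brick_transport m n (B ` {..<n}) (forest_image_desc n B) (\<lambda>_. f)"
proof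
  have f_inj: "inj_on f (carr m)" using homeomorphic_map_cubes_inj_on[OF homeo] .
  show "brick_partition m (B ` {..<n})" using partition .
  show "valid_brick n (forest_image_desc n B q c) \<and> bset (forest_image_desc n B q c) = f ` bset c"
    if q: "q \<in> B ` {..<n}" and c: "valid_brick m c" "bset c \<subseteq> bset q" for q c
  proof -
    obtain i where "i < n" "q = B i" using q by blast
    then show ?thesis using image_subbrick[of i c] forest_image_desc_brick[of i c] c by simp
  qed
  show "inj_on f (bset q)" if "q \<in> B ` {..<n}" for q
    using that inj_on_subset[OF f_inj] bset_B_subset_carr by blast
  show "f ` bset q \<inter> f ` bset q' = {}" if "q \<in> B ` {..<n}" "q' \<in> B ` {..<n}" "q \<noteq> q'" for q q'
    using that f_on_brick by fastforce
  show "carr n \<subseteq> (\<Union>q\<in>B ` {..<n}. f ` bset q)"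
    using homeomorphic_map_cubes_image[OF homeo] cover by blast
qed

lemma dyadic_partition_image:
  assumes P: "dyadic_partition m P" and refines: "\<forall>c\<in>P. \<exists>i<n. bset c \<subseteq> bset (B i)"
  shows "dyadic_partition n
    {(i, desc_drop (snd (B i)) (snd c)) | c i. c \<in> P \<and> i < n \<and> bset c \<subseteq> bset (B i)}"
proof -
  let ?E = "forest_image_desc n B"
  interpret T: brick_transport m n "B ` {..<n}" ?E "\<lambda>_. f" by (rule brick_transport_forest)
  have "(\<lambda>q. ?E q q) ` B ` {..<n} = (\<lambda>i. ?E (B i) (B i)) ` {..<n}"
    by (simp add: image_image)
  also have "\<dots> = (\<lambda>i. (i, \<lambda>_. [])) ` {..<n}"
    using forest_image_desc_brick by (intro image_cong) (auto simp: desc_drop_def)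
  also have "\<dots> = cube_partition n"
    by (auto simp: cube_partition_def)
  finally have "T.transport (cube_partition m) = cube_partition n"
    using T.transport_cube_partition by simp
  moreover have "T.transport P = {?E q c | c q. c \<in> P \<and> q \<in> B ` {..<n} \<and> bset c \<subseteq> bset q}"
    using refines by (intro T.transport_refining) blast
  moreover have "\<dots> =
      {(i, desc_drop (snd (B i)) (snd c)) | c i. c \<in> P \<and> i < n \<and> bset c \<subseteq> bset (B i)}"
  proof (intro Collect_cong iffI)
    fix t assume "\<exists>c q. t = ?E q c \<and> c \<in> P \<and> q \<in> B ` {..<n} \<and> bset c \<subseteq> bset q"
    then obtain c i where "t = ?E (B i) c" "c \<in> P" "i < n" "bset c \<subseteq> bset (B i)" by blast
    then show "\<exists>c i. t = (i, desc_drop (snd (B i)) (snd c)) \<and> c \<in> P \<and> i < n \<and> bset c \<subseteq> bset (B i)"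
      using forest_image_desc_brick by blast
  next
    fix t assume "\<exists>c i. t = (i, desc_drop (snd (B i)) (snd c)) \<and> c \<in> P \<and> i < n \<and> bset c \<subseteq> bset (B i)"
    then obtain c i where "t = ?E (B i) c" "c \<in> P" "i < n" "bset c \<subseteq> bset (B i)"
      using forest_image_desc_brick by metis
    then show "\<exists>c q. t = ?E q c \<and> c \<in> P \<and> q \<in> B ` {..<n} \<and> bset c \<subseteq> bset q" by blast
  qed
  ultimately show ?thesis
    using T.dyadic_partition_transport[OF P] dyadic_partition_cube_partition[of n] by simp
qed

end

lemma homeomorphic_map_factor:
  fixes f g :: "'a cmap"
  assumes f: "homeomorphic_map (cubes m) (cubes n1) f" and g: "homeomorphic_map (cubes m) (cubes n) g"
    and g_ext: "g \<in> extensional (carr m)"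
  obtains h where "homeomorphic_map (cubes n1) (cubes n) h" "h \<in> extensional (carr n1)"
    "\<And>x. x \<in> carr m \<Longrightarrow> h (f x) = g x" "compose (carr m) h f = g"
proof -
  obtain f' where f': "homeomorphic_maps (cubes m) (cubes n1) f f'"
    using f homeomorphic_map_maps by blast
  define h where "h = restrict (g \<circ> f') (carr n1)"
  have "homeomorphic_map (cubes n1) (cubes m) f'"
    using f' homeomorphic_maps_map by blast
  then have "homeomorphic_map (cubes n1) (cubes n) (g \<circ> f')"
    by (rule homeomorphic_map_compose[OF _ g])
  then have homeo: "homeomorphic_map (cubes n1) (cubes n) h"
    by (rule homeomorphic_map_eq) (simp add: h_def)
  have ext: "h \<in> extensional (carr n1)" by (simp add: h_def)
  have hf: "h (f x) = g x" if "x \<in> carr m" for x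
    using f' that homeomorphic_map_cubes_in_carr[OF f that] by (simp add: h_def homeomorphic_maps_def)
  have comp: "compose (carr m) h f = g"
  proof
    fix x show "compose (carr m) h f x = g x"
      by (cases "x \<in> carr m") (simp_all add: compose_def hf extensional_arb[OF g_ext])
  qed
  show thesis by (rule that[OF homeo ext hf comp])
qed

lemma fibre_refines_dyadic_image_bricks:
  assumes F: "mc_forest_via m n1 f B" and Fg: "mc_forest_via m n g Bg"
    and R: "fibre_refines m g f"
  obtains idx where "\<And>j. j < n \<Longrightarrow> idx j < n1 \<and> bset (Bg j) \<subseteq> bset (B (idx j))"
    "dyadic_partition n1 ((\<lambda>j. (idx j, desc_drop (snd (B (idx j))) (snd (Bg j)))) ` {..<n})"
proof -
  interpret F: mc_forest_on m n1 f B by (rule mc_forest_on.intro[OF F])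
  interpret Fg: mc_forest_on m n g Bg by (rule mc_forest_on.intro[OF Fg])
  obtain idx where idx: "\<And>j. j < n \<Longrightarrow> idx j < n1 \<and> bset (Bg j) \<subseteq> bset (B (idx j))"
    using fibre_refines_brick_subset[OF F Fg R] by metis
  have idx_unique: "i = idx j" if "j < n" "i < n1" "bset (Bg j) \<subseteq> bset (B i)" for i j
  proof -
    obtain x where "x \<in> bset (Bg j)" using bset_nonempty by blast
    then show ?thesis using that idx[OF that(1)] F.unique by blast
  qed
  let ?Bh = "\<lambda>j. (idx j, desc_drop (snd (B (idx j))) (snd (Bg j)))"
  have "{(i, desc_drop (snd (B i)) (snd c)) | c i. c \<in> Bg ` {..<n} \<and> i < n1 \<and> bset c \<subseteq> bset (B i)}
      = ?Bh ` {..<n}" (is "?S = _")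
  proof
    show "?S \<subseteq> ?Bh ` {..<n}"
    proof
      fix t assume "t \<in> ?S"
      then obtain j i where "t = (i, desc_drop (snd (B i)) (snd (Bg j)))"
        "j < n" "i < n1" "bset (Bg j) \<subseteq> bset (B i)" by blast
      then show "t \<in> ?Bh ` {..<n}" using idx_unique by blast
    qed
    show "?Bh ` {..<n} \<subseteq> ?S" using idx by blast
  qed
  moreover have "\<forall>c\<in>Bg ` {..<n}. \<exists>i<n1. bset c \<subseteq> bset (B i)" using idx by blast
  ultimately have "dyadic_partition n1 (?Bh ` {..<n})"
    using F.dyadic_partition_image[OF Fg.dyadic] by simp
  with idx show thesis by (rule that)
qed

lemma mc_forest_factor:
  assumes F: "mc_forest_via m n1 f B" and Fg: "mc_forest_via m n g Bg"
    and R: "fibre_refines m g f"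
  shows "\<exists>h. mc_forest n1 n h \<and> compose (carr m) h f = g"
proof -
  interpret F: mc_forest_on m n1 f B by (rule mc_forest_on.intro[OF F])
  interpret Fg: mc_forest_on m n g Bg by (rule mc_forest_on.intro[OF Fg])
  obtain idx where idx: "\<And>j. j < n \<Longrightarrow> idx j < n1 \<and> bset (Bg j) \<subseteq> bset (B (idx j))"
    and dyadic: "dyadic_partition n1 ((\<lambda>j. (idx j, desc_drop (snd (B (idx j))) (snd (Bg j)))) ` {..<n})"
    using fibre_refines_dyadic_image_bricks[OF F Fg R] by blast
  define Bh where "Bh = (\<lambda>j. (idx j, desc_drop (snd (B (idx j))) (snd (Bg j))))"
  have image: "bset (Bh j) = f ` bset (Bg j)" if "j < n" for j
    using F.image_subbrick(2)[of "idx j" "Bg j"] idx[OF that] Fg.valid[OF that]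
    unfolding Bh_def by auto
  have inj: "inj_on Bh {..<n}"
  proof (rule inj_onI)
    fix j j' assume "j \<in> {..<n}" "j' \<in> {..<n}" "Bh j = Bh j'"
    then have "f ` bset (Bg j) = f ` bset (Bg j')" using image[of j] image[of j'] by simp
    then have "bset (Bg j) = bset (Bg j')"
      using inj_on_image_eq_iff[OF homeomorphic_map_cubes_inj_on[OF F.homeo]] Fg.bset_B_subset_carr
        \<open>j \<in> {..<n}\<close> \<open>j' \<in> {..<n}\<close> by simp
    then show "j = j'"
      using bset_inj Fg.inj_B \<open>j \<in> {..<n}\<close> \<open>j' \<in> {..<n}\<close> by (metis inj_onD)
  qed
  obtain h where h: "homeomorphic_map (cubes n1) (cubes n) h" "h \<in> extensional (carr n1)"
    "\<And>x. x \<in> carr m \<Longrightarrow> h (f x) = g x" "compose (carr m) h f = g"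
    using homeomorphic_map_factor[OF F.homeo Fg.homeo Fg.f_extensional] by blast
  have "h y = (j, Phi_inv (snd (Bh j)) (snd y))" if j: "j < n" and y: "y \<in> bset (Bh j)" for j y
  proof -
    obtain x where x: "x \<in> bset (Bg j)" "y = f x" using image[OF j] y by blast
    have sub: "x \<in> bset (B (idx j))" "brick (snd (Bg j)) \<subseteq> brick (snd (B (idx j)))"
      using idx[OF j] bset_subsetD x(1) by blast+
    have "h y = g x" using h(3) x Fg.bset_B_subset_carr[OF j] by blast
    also have "\<dots> = (j, Phi_inv (snd (Bg j)) (snd x))" using Fg.f_on_brick[OF j x(1)] .
    also have "\<dots> = (j, Phi_inv (snd (Bh j)) (snd y))"
      using x(2) F.f_on_brick[OF _ sub(1)] idx[OF j] Phi_inv_desc_drop[OF sub(2)] by (simp add: Bh_def)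
    finally show ?thesis .
  qed
  then have "mc_forest_via n1 n h Bh"
    unfolding mc_forest_via_def using h(1,2) dyadic[folded Bh_def] inj by blast
  then show ?thesis using h(4) unfolding mc_forest_def by blast
qed

lemma cls_le_forest_iff:
  assumes G: "perm_subgroup G" and m: "1 \<le> m" and f: "mc_forest m n f" and g: "mc_forest m k g"
  shows "cls_le G (cls G m n f) (cls G m k g) \<longleftrightarrow> fibre_refines m g f"
proof
  obtain B Bg where F: "mc_forest_via m n f B" and Fg: "mc_forest_via m k g Bg"
    using f g unfolding mc_forest_def by blast
  show "cls_le G (cls G m n f) (cls G m k g) \<Longrightarrow> fibre_refines m g f"
    using cls_le_imp_fibre_refines[OF G] mc_forest_on.homeo mc_forest_on.f_extensional
      mc_forest_on.intro F Fg by metis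
  assume "fibre_refines m g f"
  then obtain h where "mc_forest n k h" "compose (carr m) h f = g"
    using mc_forest_factor[OF F Fg] by blast
  then show "cls_le G (cls G m n f) (cls G m k g)"
    using mc_forest_via_SV[OF F G m] unfolding cls_le_def by metis
qed

section \<open>Least upper bounds\<close>

lemma common_refinement_forest:
  assumes F1: "mc_forest_via m n1 f1 B1" and F2: "mc_forest_via m n2 f2 B2"
  obtains n0 f0 B0 where "mc_forest_via m n0 f0 B0"
    "B0 ` {..<n0} = partition_meet (B1 ` {..<n1}) (B2 ` {..<n2})"
    "\<And>x y. x \<in> carr m \<Longrightarrow> y \<in> carr m \<Longrightarrow>
       fst (f0 x) = fst (f0 y) \<longleftrightarrow> fst (f1 x) = fst (f1 y) \<and> fst (f2 x) = fst (f2 y)"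
proof -
  interpret F1: mc_forest_on m n1 f1 B1 by (rule mc_forest_on.intro[OF F1])
  interpret F2: mc_forest_on m n2 f2 B2 by (rule mc_forest_on.intro[OF F2])
  obtain n0 B0 where F0: "mc_forest_via m n0 (forest_map m n0 B0) B0"
    and B0: "B0 ` {..<n0} = partition_meet (B1 ` {..<n1}) (B2 ` {..<n2})"
    using ex_mc_forest_via_bricks[OF dyadic_partition_meet[OF F1.dyadic F2.dyadic]] by blast
  interpret F0: mc_forest_on m n0 "forest_map m n0 B0" B0 by (rule mc_forest_on.intro[OF F0])
  have "fst (forest_map m n0 B0 x) = fst (forest_map m n0 B0 y) \<longleftrightarrow>
      fst (f1 x) = fst (f1 y) \<and> fst (f2 x) = fst (f2 y)" if "x \<in> carr m" "y \<in> carr m" for x y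
    unfolding F0.same_fibre_iff[OF that] F1.same_fibre_iff[OF that] F2.same_fibre_iff[OF that] B0
    by (rule same_brick_partition_meet)
  with F0 B0 show thesis by (rule that)
qed

lemma mutually_refining_forests_same_bricks:
  assumes Fg: "mc_forest_via m n g Bg" and F: "mc_forest_via m k f B"
    and "fibre_refines m g f" "fibre_refines m f g" and j: "j < n"
  shows "\<exists>i<k. Bg j = B i"
proof -
  interpret Fg: mc_forest_on m n g Bg by (rule mc_forest_on.intro[OF Fg])
  interpret F: mc_forest_on m k f B by (rule mc_forest_on.intro[OF F])
  obtain x0 where x0: "x0 \<in> bset (Bg j)" using bset_nonempty by blast
  then have "x0 \<in> carr m" using Fg.bset_B_subset_carr[OF j] by blast
  then obtain i where i: "i < k" "x0 \<in> bset (B i)" using F.cover by blast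
  have "bset (Bg j) = {x \<in> carr m. fst (g x) = fst (g x0)}" using Fg.bset_eq_fibre[OF j x0] .
  also have "\<dots> = {x \<in> carr m. fst (f x) = fst (f x0)}"
  proof (intro Collect_cong conj_cong refl)
    fix x :: "nat \<times> 'a cpt" assume "x \<in> carr m"
    then show "fst (g x) = fst (g x0) \<longleftrightarrow> fst (f x) = fst (f x0)"
      using assms(3,4) \<open>x0 \<in> carr m\<close> unfolding fibre_refines_def by blast
  qed
  also have "\<dots> = bset (B i)" using F.bset_eq_fibre[OF i] by simp
  finally have "Bg j = B i" by (rule bset_inj)
  then show ?thesis using i(1) by blast
qed

lemma is_lub_common_refinement:
  assumes G: "perm_subgroup G" and m: "1 \<le> m"
    and f1: "mc_forest m n1 f1" and f2: "mc_forest m n2 f2" and f0: "mc_forest m n0 f0"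
    and fibres: "\<And>x y. x \<in> carr m \<Longrightarrow> y \<in> carr m \<Longrightarrow>
       fst (f0 x) = fst (f0 y) \<longleftrightarrow> fst (f1 x) = fst (f1 y) \<and> fst (f2 x) = fst (f2 y)"
  shows "is_lub_in G (Fm G m) (cls G m n1 f1) (cls G m n2 f2) (cls G m n0 f0)"
  unfolding is_lub_in_def
proof (intro conjI ballI impI)
  show "cls G m n0 f0 \<in> Fm G m" using f0 unfolding Fm_def by blast
  show "cls_le G (cls G m n1 f1) (cls G m n0 f0)"
    unfolding cls_le_forest_iff[OF G m f1 f0] fibre_refines_def using fibres by blast
  show "cls_le G (cls G m n2 f2) (cls G m n0 f0)"
    unfolding cls_le_forest_iff[OF G m f2 f0] fibre_refines_def using fibres by blast
  fix u assume u: "u \<in> Fm G m" and le: "cls_le G (cls G m n1 f1) u \<and> cls_le G (cls G m n2 f2) u"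
  obtain k g where g: "u = cls G m k g" "mc_forest m k g"
    using u unfolding Fm_def by blast
  then have "fibre_refines m g f1" "fibre_refines m g f2"
    using le cls_le_forest_iff[OF G m f1 g(2)] cls_le_forest_iff[OF G m f2 g(2)] by simp_all
  then show "cls_le G (cls G m n0 f0) u"
    unfolding g(1) cls_le_forest_iff[OF G m f0 g(2)] fibre_refines_def using fibres by blast
qed

lemma elem_rep_of_lub:
  assumes G: "perm_subgroup G" and m: "1 \<le> m"
    and F0: "mc_forest_via m n0 f0 B0" and elementary: "\<forall>j<n0. elementary_desc (snd (B0 j))"
    and lub0: "is_lub_in G (Fm G m) v1 v2 (cls G m n0 f0)"
    and lub: "is_lub_in G (Fm G m) v1 v2 u"
  shows "elem_rep G m u"
proof -
  obtain n g where u: "u = cls G m n g" and "mc_forest m n g"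
    using lub unfolding is_lub_in_def Fm_def by blast
  then obtain Bg where Fg: "mc_forest_via m n g Bg" unfolding mc_forest_def by blast
  have "cls_le G (cls G m n g) (cls G m n0 f0)" "cls_le G (cls G m n0 f0) (cls G m n g)"
    using lub lub0 u unfolding is_lub_in_def by blast+
  then have "fibre_refines m f0 g" "fibre_refines m g f0"
    using cls_le_forest_iff[OF G m] Fg F0 unfolding mc_forest_def by blast+
  then have "\<forall>j<n. elementary_desc (snd (Bg j))"
    using mutually_refining_forests_same_bricks[OF Fg F0] elementary by metis
  then show ?thesis
    using Fg u unfolding elem_rep_def elem_mc_forest_def elementary_desc_def by blast
qed

lemma lub_forest:
  assumes G: "perm_subgroup G" and m: "1 \<le> m"
    and F1: "mc_forest_via m n1 f1 B1" and F2: "mc_forest_via m n2 f2 B2"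
  obtains n0 f0 B0 where "mc_forest_via m n0 f0 B0"
    "is_lub_in G (Fm G m) (cls G m n1 f1) (cls G m n2 f2) (cls G m n0 f0)"
    "(\<forall>j<n1. elementary_desc (snd (B1 j))) \<Longrightarrow> (\<forall>j<n2. elementary_desc (snd (B2 j))) \<Longrightarrow>
       \<forall>j<n0. elementary_desc (snd (B0 j))"
proof -
  obtain n0 f0 B0 where F0: "mc_forest_via m n0 f0 B0"
    and B0: "B0 ` {..<n0} = partition_meet (B1 ` {..<n1}) (B2 ` {..<n2})"
    and fibres: "\<And>x y. x \<in> carr m \<Longrightarrow> y \<in> carr m \<Longrightarrow>
       fst (f0 x) = fst (f0 y) \<longleftrightarrow> fst (f1 x) = fst (f1 y) \<and> fst (f2 x) = fst (f2 y)"
    using common_refinement_forest[OF F1 F2] by metis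
  have "is_lub_in G (Fm G m) (cls G m n1 f1) (cls G m n2 f2) (cls G m n0 f0)"
    using F0 F1 F2 fibres by (intro is_lub_common_refinement[OF G m]) (auto simp: mc_forest_def)
  moreover have "\<forall>j<n0. elementary_desc (snd (B0 j))"
    if "\<forall>j<n1. elementary_desc (snd (B1 j))" "\<forall>j<n2. elementary_desc (snd (B2 j))"
    using elementary_partition_meet[of "B1 ` {..<n1}" "B2 ` {..<n2}"] that B0 by auto
  ultimately show thesis using F0 that by blast
qed

theorem proposition5p3:
  fixes G :: "('a \<Rightarrow> 'a) set" and m :: nat
  assumes "perm_subgroup G" and "1 \<le> m"
    and "v1 \<in> Fm G m" and "v2 \<in> Fm G m"
  shows "(\<exists>u. is_lub_in G (Fm G m) v1 v2 u) \<and>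
         (\<forall>u. is_lub_in G (Fm G m) v1 v2 u \<longrightarrow>
              elem_rep G m v1 \<longrightarrow> elem_rep G m v2 \<longrightarrow> elem_rep G m u)"
proof (intro conjI allI impI)
  obtain n1 f1 B1 n2 f2 B2 where "v1 = cls G m n1 f1" "v2 = cls G m n2 f2"
    and "mc_forest_via m n1 f1 B1" "mc_forest_via m n2 f2 B2"
    using assms(3,4) unfolding Fm_def mc_forest_def by blast
  then show "\<exists>u. is_lub_in G (Fm G m) v1 v2 u"
    using lub_forest[OF assms(1,2)] by metis
next
  fix u assume lub: "is_lub_in G (Fm G m) v1 v2 u" and "elem_rep G m v1" "elem_rep G m v2"
  then obtain n1 f1 B1 n2 f2 B2 where v: "v1 = cls G m n1 f1" "v2 = cls G m n2 f2"
    and F1: "mc_forest_via m n1 f1 B1" "\<forall>j<n1. elementary_desc (snd (B1 j))"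
    and F2: "mc_forest_via m n2 f2 B2" "\<forall>j<n2. elementary_desc (snd (B2 j))"
    unfolding elem_rep_def elem_mc_forest_def elementary_desc_def by blast
  obtain n0 f0 B0 where "mc_forest_via m n0 f0 B0" "is_lub_in G (Fm G m) v1 v2 (cls G m n0 f0)"
    "\<forall>j<n0. elementary_desc (snd (B0 j))"
    using lub_forest[OF assms(1,2) F1(1) F2(1)] F1(2) F2(2) unfolding v by metis
  then show "elem_rep G m u" using elem_rep_of_lub[OF assms(1,2) _ _ _ lub] by blast
qed

end
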